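(* Let $m\ge1$ be an integer and $\alpha>0$. (i) Let $a,\lambda\in\mathbb{C}$ with $|\lambda|<\alpha$, and define $K_\lambda f(z)=am\,e^{\lambda z^m}\int_0^ze^{-\lambda w^m}w^{m-1}f(w)\,dw$ for entire $f$. Then $K_\lambda$ is a bounded operator on $\mathcal{F}^\infty_{(\alpha,m)}$ with $\|K_\lambda\|\le\frac{|a|}{\alpha-|\lambda|}$. (ii) For $a_m\in\mathbb{C}$ and $g_m(z)=a_mz^m$, the operator $V_{g_m}f(z)=\int_0^zg_m'(w)f(w)\,dw$ is bounded on $\mathcal{F}^\infty_{(\alpha,m)}$ with $\|V_{g_m}\|\le\frac{|a_m|}{\alpha}$.
   Context: For $\alpha>0$, $m>0$, $\mathcal{F}^\infty_{(\alpha,m)}$ denotes the Banach space of entire functions $f$ with $\|f\|_{(\infty,\alpha,m)}=\sup_{r>0}e^{-\alpha r^m}\max_{|z|=r}|f(z)|<\infty$. *)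

theory Defs
  imports "HOL-Complex_Analysis.Complex_Analysis"
begin

definition fock_weighted :: "real \<Rightarrow> nat \<Rightarrow> (complex \<Rightarrow> complex) \<Rightarrow> real \<Rightarrow> real" where
  "fock_weighted \<alpha> m f r = exp (- \<alpha> * r ^ m) * (SUP z\<in>sphere 0 r. norm (f z))"

definition fock_space :: "real \<Rightarrow> nat \<Rightarrow> (complex \<Rightarrow> complex) set" where
  "fock_space \<alpha> m = {f. f holomorphic_on UNIV \<and> bdd_above (fock_weighted \<alpha> m f ` {0<..})}"

definition fock_norm :: "real \<Rightarrow> nat \<Rightarrow> (complex \<Rightarrow> complex) \<Rightarrow> real" where
  "fock_norm \<alpha> m f = (SUP r\<in>{0<..}. fock_weighted \<alpha> m f r)"

text \<open>Integral from 0 to z of an entire function (path independent; along the segment).\<close>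
definition int0 :: "(complex \<Rightarrow> complex) \<Rightarrow> complex \<Rightarrow> complex" where
  "int0 h z = contour_integral (linepath 0 z) h"

definition K_op :: "complex \<Rightarrow> nat \<Rightarrow> complex \<Rightarrow> (complex \<Rightarrow> complex) \<Rightarrow> complex \<Rightarrow> complex" where
  "K_op a m l f z = a * of_nat m * exp (l * z ^ m) *
      int0 (\<lambda>w. exp (- l * w ^ m) * w ^ (m - 1) * f w) z"

definition V_op :: "(complex \<Rightarrow> complex) \<Rightarrow> (complex \<Rightarrow> complex) \<Rightarrow> complex \<Rightarrow> complex" where
  "V_op g f z = int0 (\<lambda>w. deriv g w * f w) z"

end

theory Submission
  imports Defs
begin

text \<open>Parametrising the integral along the segment, the growth bound
  \<open>|f(tz)| \<le> \<parallel>f\<parallel> e^{\<alpha> t^m r^m}\<close> and \<open>|e^{\<lambda>(z^m - (tz)^m)}| \<le> e^{|\<lambda>| r^m (1 - t^m)}\<close>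
  dominate the integrand of \<open>K\<^sub>\<lambda> f(z)\<close>, \<open>r = |z|\<close>, by a constant times
  \<open>m r^m t^{m-1} e^{(\<alpha> - |\<lambda>|) r^m t^m}\<close>. This has the explicit primitive
  \<open>e^{(\<alpha> - |\<lambda>|) r^m t^m} / (\<alpha> - |\<lambda>|)\<close>, which yields
  \<open>|K\<^sub>\<lambda> f(z)| \<le> |a| / (\<alpha> - |\<lambda>|) \<parallel>f\<parallel> e^{\<alpha> r^m}\<close>. The operator \<open>V\<^sub>g\<close> with
  \<open>g(z) = a\<^sub>m z^m\<close> is \<open>K\<^sub>0\<close> with \<open>a = a\<^sub>m\<close>.\<close>

lemma has_field_derivative_int0:
  assumes "h holomorphic_on UNIV"
  shows "(int0 h has_field_derivative h x) (at x)"
  unfolding int0_def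
proof (rule triangle_contour_integrals_starlike_primitive[where S=UNIV and a=0])
  show "continuous_on UNIV h" using assms holomorphic_on_imp_continuous_on by blast
  fix b c :: complex
  have "(h has_contour_integral 0) (linepath 0 b +++ linepath b c +++ linepath c 0)"
    by (rule Cauchy_theorem_triangle) (use assms holomorphic_on_subset in blast)
  then show "contour_integral (linepath 0 b) h + contour_integral (linepath b c) h +
             contour_integral (linepath c 0) h = 0"
    by (simp add: has_chain_integral_chain_integral3)
qed auto

lemma holomorphic_on_int0:
  assumes "h holomorphic_on UNIV"
  shows "int0 h holomorphic_on UNIV"
  unfolding holomorphic_on_def field_differentiable_def
  using has_field_derivative_int0[OF assms] has_field_derivative_at_within by blast

lemma has_integral_int0:
  assumes "continuous_on UNIV h"
  shows "((\<lambda>t. h (of_real t * z) * z) has_integral int0 h z) {0..1}"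
proof -
  have "h contour_integrable_on linepath 0 z"
    using assms continuous_on_subset by (intro contour_integrable_continuous_linepath) blast
  then have "(h has_contour_integral int0 h z) (linepath 0 z)"
    unfolding int0_def by (rule has_contour_integral_integral)
  moreover have "linepath 0 z t = of_real t * z" for t
    by (simp add: linepath_def scaleR_conv_of_real)
  ultimately show ?thesis by (simp add: has_contour_integral_linepath)
qed

lemma has_integral_power_exp:
  fixes c :: real
  assumes "m \<ge> 1"
  shows "((\<lambda>t. c * of_nat m * t ^ (m - 1) * exp (c * t ^ m)) has_integral exp c - 1) {0..1}"
proof -
  have "((\<lambda>t. exp (c * t ^ m)) has_real_derivative c * of_nat m * t ^ (m - 1) * exp (c * t ^ m))
          (at t within {0..1})" for t
    by (auto intro!: derivative_eq_intros simp: algebra_simps)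
  then have "((\<lambda>t. c * of_nat m * t ^ (m - 1) * exp (c * t ^ m)) has_integral
               exp (c * 1 ^ m) - exp (c * 0 ^ m)) {0..1}"
    by (intro fundamental_theorem_of_calculus)
       (auto simp: has_real_derivative_iff_has_vector_derivative[symmetric])
  then show ?thesis using assms by (simp add: power_0_left)
qed

lemma norm_le_fock_norm:
  assumes "f \<in> fock_space \<alpha> m"
  shows "norm (f w) \<le> fock_norm \<alpha> m f * exp (\<alpha> * norm w ^ m)"
proof -
  have "f holomorphic_on UNIV" using assms unfolding fock_space_def by auto
  then have cont: "continuous_on UNIV f" by (rule holomorphic_on_imp_continuous_on)
  have nonzero: "norm (f w) \<le> fock_norm \<alpha> m f * exp (\<alpha> * norm w ^ m)" if "w \<noteq> 0" for w
  proof -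
    let ?S = "SUP z\<in>sphere 0 (norm w). norm (f z)"
    have "bdd_above ((\<lambda>z. norm (f z)) ` sphere 0 (norm w))"
      using continuous_on_subset[OF cont]
      by (intro bounded_imp_bdd_above compact_imp_bounded compact_continuous_image
          continuous_intros) auto
    then have "norm (f w) \<le> ?S" by (intro cSUP_upper) auto
    moreover have "fock_weighted \<alpha> m f (norm w) \<le> fock_norm \<alpha> m f"
      unfolding fock_norm_def using assms that unfolding fock_space_def
      by (intro cSUP_upper) auto
    then have "?S \<le> fock_norm \<alpha> m f * exp (\<alpha> * norm w ^ m)"
      by (simp add: fock_weighted_def exp_minus field_simps)
    ultimately show ?thesis by linarith
  qed
  txt \<open>The norm only involves circles of positive radius, so the bound at \<open>0\<close> comes by continuity.\<close>
  let ?good = "{w. norm (f w) \<le> fock_norm \<alpha> m f * exp (\<alpha> * norm w ^ m)}"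
  have "closed ?good"
    using cont by (intro closed_Collect_le continuous_intros) auto
  moreover have "- {0} \<subseteq> ?good" using nonzero by auto
  ultimately have "closure (- {0}) \<subseteq> ?good" by (rule closure_minimal[rotated])
  then show ?thesis by (auto simp: closure_complement)
qed

lemma fock_norm_nonneg:
  assumes "f \<in> fock_space \<alpha> m"
  shows "fock_norm \<alpha> m f \<ge> 0"
  using norm_le_fock_norm[OF assms, of 0] norm_ge_zero[of "f 0"]
  by (metis exp_gt_zero order.trans zero_le_mult_iff not_le)

lemma fock_space_if_growth_bound:
  assumes hol: "g holomorphic_on UNIV" and growth: "\<And>z. norm (g z) \<le> M * exp (\<alpha> * norm z ^ m)"
  shows "g \<in> fock_space \<alpha> m" and "fock_norm \<alpha> m g \<le> M"
proof -
  have weighted: "fock_weighted \<alpha> m g r \<le> M" if "r > 0" for r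
  proof -
    have "(SUP z\<in>sphere 0 r. norm (g z)) \<le> M * exp (\<alpha> * r ^ m)"
      using that growth by (intro cSUP_least) auto
    then show ?thesis
      unfolding fock_weighted_def by (simp add: exp_minus field_simps)
  qed
  then have "bdd_above (fock_weighted \<alpha> m g ` {0<..})"
    by (intro bdd_aboveI2) auto
  then show "g \<in> fock_space \<alpha> m"
    using hol unfolding fock_space_def by auto
  show "fock_norm \<alpha> m g \<le> M"
    unfolding fock_norm_def using weighted by (intro cSUP_least) auto
qed

lemma norm_exp_power_diff_le:
  fixes l z :: complex
  assumes "0 \<le> t" "t \<le> 1"
  shows "norm (exp (l * z ^ m) * exp (- l * (of_real t * z) ^ m))
           \<le> exp (norm l * norm z ^ m * (1 - t ^ m))"
proof -
  have "norm (1 - complex_of_real (t ^ m)) = 1 - t ^ m"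
    using assms power_le_one[of t m]
    by (metis abs_of_nonneg diff_ge_0_iff_ge norm_of_real of_real_1 of_real_diff)
  then have norm_exponent:
    "norm (l * z ^ m * (1 - of_real (t ^ m))) = norm l * norm z ^ m * (1 - t ^ m)"
    by (simp add: norm_mult norm_power)
  have "exp (l * z ^ m) * exp (- l * (of_real t * z) ^ m) = exp (l * z ^ m * (1 - of_real (t ^ m)))"
    by (simp add: exp_add[symmetric] algebra_simps power_mult_distrib)
  also have "norm \<dots> \<le> exp (norm (l * z ^ m * (1 - of_real (t ^ m))))"
    unfolding norm_exp_eq_Re using complex_Re_le_cmod by blast
  finally show ?thesis unfolding norm_exponent .
qed

lemma norm_K_op_integrand_le:
  assumes m: "m \<ge> 1" and f: "f \<in> fock_space \<alpha> m" and t: "0 \<le> t" "t \<le> 1"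
  shows "norm (a * of_nat m * exp (l * z ^ m) *
           (exp (- l * (of_real t * z) ^ m) * (of_real t * z) ^ (m - 1) * f (of_real t * z) * z))
         \<le> norm a * fock_norm \<alpha> m f * exp (norm l * norm z ^ m) *
           (of_nat m * norm z ^ m * t ^ (m - 1) * exp ((\<alpha> - norm l) * norm z ^ m * t ^ m))"
  (is "?lhs \<le> ?rhs")
proof -
  define r where "r = norm z"
  have f_bound: "norm (f (of_real t * z)) \<le> fock_norm \<alpha> m f * exp (\<alpha> * t ^ m * r ^ m)"
    using norm_le_fock_norm[OF f, of "of_real t * z"] t
    by (simp add: r_def norm_mult power_mult_distrib mult.assoc)
  have "?lhs = norm a * of_nat m * norm (exp (l * z ^ m) * exp (- l * (of_real t * z) ^ m)) *
                (t ^ (m - 1) * r ^ (m - 1)) * norm (f (of_real t * z)) * r"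
    using t by (simp add: r_def norm_mult norm_power power_mult_distrib mult_ac)
  also have "\<dots> \<le> norm a * of_nat m * exp (norm l * r ^ m * (1 - t ^ m)) *
                (t ^ (m - 1) * r ^ (m - 1)) * (fock_norm \<alpha> m f * exp (\<alpha> * t ^ m * r ^ m)) * r"
    using norm_exp_power_diff_le[OF t, of l z m] f_bound t fock_norm_nonneg[OF f]
    by (intro mult_mono mult_right_mono mult_left_mono) (auto simp: r_def)
  also have "\<dots> = ?rhs"
  proof -
    have "r ^ (m - 1) * r = r ^ m" using m by (simp add: power_Suc2[symmetric])
    moreover have "exp (norm l * r ^ m * (1 - t ^ m)) * exp (\<alpha> * t ^ m * r ^ m)
                   = exp (norm l * r ^ m) * exp ((\<alpha> - norm l) * r ^ m * t ^ m)"
      by (simp add: mult_exp_exp algebra_simps)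
    ultimately show ?thesis unfolding r_def by (simp add: mult_ac)
  qed
  finally show ?thesis .
qed

lemma norm_K_op_le:
  assumes m: "m \<ge> 1" and l: "norm l < \<alpha>" and f: "f \<in> fock_space \<alpha> m"
  shows "norm (K_op a m l f z) \<le> norm a / (\<alpha> - norm l) * fock_norm \<alpha> m f * exp (\<alpha> * norm z ^ m)"
proof -
  define C where "C = norm a * fock_norm \<alpha> m f * exp (norm l * norm z ^ m) / (\<alpha> - norm l)"
  define c where "c = (\<alpha> - norm l) * norm z ^ m"
  have C_nonneg: "C \<ge> 0"
    unfolding C_def using l fock_norm_nonneg[OF f] by simp
  have hol: "f holomorphic_on UNIV" using f unfolding fock_space_def by auto
  define k where "k t = a * of_nat m * exp (l * z ^ m) *
           (exp (- l * (of_real t * z) ^ m) * (of_real t * z) ^ (m - 1) * f (of_real t * z) * z)" for t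
  define g where "g t = C * (c * of_nat m * t ^ (m - 1) * exp (c * t ^ m))" for t
  have k_int: "(k has_integral K_op a m l f z) {0..1}"
    unfolding k_def K_op_def using hol holomorphic_on_imp_continuous_on
    by (intro has_integral_mult_right has_integral_int0 continuous_intros) auto
  have g_int: "(g has_integral C * (exp c - 1)) {0..1}"
    unfolding g_def using m by (intro has_integral_mult_right has_integral_power_exp)
  have "g t = norm a * fock_norm \<alpha> m f * exp (norm l * norm z ^ m) *
               (of_nat m * norm z ^ m * t ^ (m - 1) * exp ((\<alpha> - norm l) * norm z ^ m * t ^ m))" for t
    unfolding g_def C_def c_def using l by (simp add: field_simps)
  then have "norm (k t) \<le> g t" if "t \<in> {0..1}" for t
    unfolding k_def using norm_K_op_integrand_le[OF m f] that by auto
  then have "norm (integral {0..1} k) \<le> integral {0..1} g"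
    using k_int g_int by (intro integral_norm_bound_integral) (auto simp: integrable_on_def)
  then have "norm (K_op a m l f z) \<le> C * (exp c - 1)"
    using k_int g_int by (simp add: integral_unique)
  also have "\<dots> \<le> C * exp c" using C_nonneg by (simp add: mult_left_mono)
  also have "\<dots> = norm a / (\<alpha> - norm l) * fock_norm \<alpha> m f * exp (\<alpha> * norm z ^ m)"
    unfolding C_def c_def by (simp add: mult_exp_exp algebra_simps)
  finally show ?thesis .
qed

lemma holomorphic_on_K_op:
  assumes "f holomorphic_on UNIV"
  shows "K_op a m l f holomorphic_on UNIV"
  unfolding K_op_def using assms
  by (intro holomorphic_intros holomorphic_on_int0) auto

lemma V_op_monomial_eq_K_op:
  assumes "continuous_on UNIV f"
  shows "V_op (\<lambda>z. b * z ^ m) f = K_op b m 0 f"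
proof
  fix z
  have "deriv (\<lambda>z. b * z ^ m) w = b * of_nat m * w ^ (m - 1)" for w
    by (rule DERIV_imp_deriv) (auto intro!: derivative_eq_intros)
  then have "V_op (\<lambda>z. b * z ^ m) f z = int0 (\<lambda>w. (b * of_nat m) * (w ^ (m - 1) * f w)) z"
    unfolding V_op_def by (simp add: mult_ac)
  also have "\<dots> = (b * of_nat m) * int0 (\<lambda>w. w ^ (m - 1) * f w) z"
    unfolding int0_def using assms continuous_on_subset
    by (intro contour_integral_lmul contour_integrable_continuous_linepath continuous_intros) blast+
  finally show "V_op (\<lambda>z. b * z ^ m) f z = K_op b m 0 f z" unfolding K_op_def by simp
qed

theorem lemma2:
  fixes m :: nat and \<alpha> :: real
  assumes "m \<ge> 1" and "\<alpha> > 0"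
  shows "(\<forall>a l :: complex. norm l < \<alpha> \<longrightarrow>
            (\<forall>f \<in> fock_space \<alpha> m.
               K_op a m l f \<in> fock_space \<alpha> m \<and>
               fock_norm \<alpha> m (K_op a m l f) \<le> norm a / (\<alpha> - norm l) * fock_norm \<alpha> m f))
       \<and> (\<forall>am :: complex.
            (\<forall>f \<in> fock_space \<alpha> m.
               V_op (\<lambda>z. am * z ^ m) f \<in> fock_space \<alpha> m \<and>
               fock_norm \<alpha> m (V_op (\<lambda>z. am * z ^ m) f) \<le> norm am / \<alpha> * fock_norm \<alpha> m f))"
proof -
  have K_bounded: "K_op a m l f \<in> fock_space \<alpha> m \<and>
           fock_norm \<alpha> m (K_op a m l f) \<le> norm a / (\<alpha> - norm l) * fock_norm \<alpha> m f"
    if "norm l < \<alpha>" "f \<in> fock_space \<alpha> m" for a l f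
  proof -
    have "f holomorphic_on UNIV" using that(2) unfolding fock_space_def by auto
    then show ?thesis
      using fock_space_if_growth_bound[OF holomorphic_on_K_op norm_K_op_le[OF assms(1) that]]
      by blast
  qed
  moreover have "V_op (\<lambda>z. am * z ^ m) f = K_op am m 0 f" if "f \<in> fock_space \<alpha> m" for am f
    using that holomorphic_on_imp_continuous_on
    by (intro V_op_monomial_eq_K_op) (auto simp: fock_space_def)
  ultimately show ?thesis using K_bounded[of 0] assms(2) by auto
qed

end
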